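(* Let $m\ge2$, $G=CK(2m-1)$, and let $B$ be a blocker for the simple Hamiltonian paths of $G$ whose $m$ edges are parallel (or equal) to the boundary edges $[0,1],\dots,[m-1,m]$, one per direction. Let $[\alpha,\alpha+1]$ and $[m-\delta-1,m-\delta]$ be the first and last edges of $\langle0,1,\dots,m\rangle$ belonging to $B$, and suppose that $B$ misses exactly one edge $[\alpha+\beta,\alpha+\beta+1]$ of the boundary path $\langle\alpha,\dots,m-\delta\rangle$. Let $B^+=\langle\alpha,\dots,\alpha+\beta\rangle$ and $B^-=\langle\alpha+\beta+1,\dots,m-\delta\rangle$. Let $E^+$ be the set of edges of $B$ parallel to $[0,1],\dots,[\alpha-1,\alpha]$ and $E^-$ the set of edges of $B$ parallel to $[m-\delta,m-\delta+1],\dots,[m-1,m]$. Then each edge of $E^+$ contains an internal vertex of $B^+$, and each edge of $E^-$ contains an internal vertex of $B^-$.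
   Context: $CK(2m-1)$ is the complete convex geometric graph on $2m-1$ points in convex position, labelled clockwise $0,\dots,2m-2$ (elements of $\mathbb{Z}_{2m-1}$), with all segments as edges; boundary edges are $[i,i+1]$. The direction of $[i,j]$ is $i+j\pmod{2m-1}$; edges are parallel if they have the same direction. A simple Hamiltonian path (SHP) is a path through all vertices whose edges pairwise do not cross; a blocker for SHPs is an edge set of smallest possible size sharing an edge with every SHP. *)

theory Defs
  imports Main
begin

text \<open>Vertices of CK(n) are 0,...,n-1 (elements of Z_n), in convex position, clockwise.
  An edge is a two-element set of vertices.\<close>

definition ck_edges :: "nat \<Rightarrow> nat set set" where
  "ck_edges n = {{i, j} | i j. i < n \<and> j < n \<and> i \<noteq> j}"

definition direction :: "nat \<Rightarrow> nat set \<Rightarrow> nat" where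
  "direction n e = (\<Sum>e) mod n"

text \<open>Segments [a,b] and [c,d] between points in convex position cross iff they have
  no common endpoint and exactly one of c, d lies strictly between a and b
  (in the labelling order, which is the cyclic order of the convex position).\<close>
definition strictly_between :: "nat \<Rightarrow> nat \<Rightarrow> nat \<Rightarrow> bool" where
  "strictly_between a b x \<longleftrightarrow> min a b < x \<and> x < max a b"

definition crosses :: "nat \<Rightarrow> nat \<Rightarrow> nat \<Rightarrow> nat \<Rightarrow> bool" where
  "crosses a b c d \<longleftrightarrow> {a, b} \<inter> {c, d} = {} \<and>
     (strictly_between a b c \<noteq> strictly_between a b d)"

definition is_shp :: "nat \<Rightarrow> nat list \<Rightarrow> bool" where
  "is_shp n p \<longleftrightarrow> distinct p \<and> set p = {0..<n} \<and>
     (\<forall>i j. i + 1 < length p \<longrightarrow> j + 1 < length p \<longrightarrow>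
        \<not> crosses (p ! i) (p ! (i + 1)) (p ! j) (p ! (j + 1)))"

definition path_edges :: "nat list \<Rightarrow> nat set set" where
  "path_edges p = {{p ! i, p ! (i + 1)} | i. i + 1 < length p}"

definition hits_all_shps :: "nat \<Rightarrow> nat set set \<Rightarrow> bool" where
  "hits_all_shps n B \<longleftrightarrow> (\<forall>p. is_shp n p \<longrightarrow> path_edges p \<inter> B \<noteq> {})"

definition is_blocker :: "nat \<Rightarrow> nat set set \<Rightarrow> bool" where
  "is_blocker n B \<longleftrightarrow> B \<subseteq> ck_edges n \<and> hits_all_shps n B \<and>
     (\<forall>B'. B' \<subseteq> ck_edges n \<longrightarrow> hits_all_shps n B' \<longrightarrow> card B \<le> card B')"

end

theory Submission
  imports Defs
begin

text \<open>
  Write D j = 2 j + 1 for the direction of the boundary edge [j, j + 1]. By downward induction on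
  j < \<alpha>, every edge e of B of direction D j has a vertex strictly inside B^+; for j = \<alpha> the edge
  of direction D \<alpha> is [\<alpha>, \<alpha> + 1] itself. Suppose e had no such vertex. On the integers, walk from
  \<alpha>, always stepping just beyond the interval visited so far: first to the left, then zigzagging
  across B^+, over the missing edge [\<alpha> + \<beta>, \<alpha> + \<beta> + 1], zigzagging across B^-, and finally to the
  right until n vertices are visited. Such a walk never crosses itself, so read modulo n it is a
  simple Hamiltonian path of CK(n), and it avoids B: its boundary edges are the missing edge and
  edges outside <\<alpha>, ..., m - \<delta>>, none of which is in B; the zigzags produce chords of even
  nonzero direction, which B lacks, chords of direction D j through the interior of B^+, which
  would have to be e, and chords of direction D (j + 1) outside B^+, excluded by induction.
  The statement about E^- is the statement about E^+ for the blocker reflected by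
  x \<mapsto> m - x (mod n), which exchanges the roles of \<alpha> and \<delta>.
\<close>

section \<open>Crossing segments on the integer line and modulo n\<close>

definition int_crosses :: "int \<Rightarrow> int \<Rightarrow> int \<Rightarrow> int \<Rightarrow> bool" where
  "int_crosses a b c d \<longleftrightarrow> {a, b} \<inter> {c, d} = {} \<and>
     ((min a b < c \<and> c < max a b) \<noteq> (min a b < d \<and> d < max a b))"

lemma crosses_eq_int_crosses: "crosses x y z w = int_crosses (int x) (int y) (int z) (int w)"
  unfolding crosses_def strictly_between_def int_crosses_def by (auto simp: min_def max_def)

lemma int_crosses_commute: "int_crosses a b c d = int_crosses c d a b"
  unfolding int_crosses_def by (auto simp: min_def max_def)

lemma int_crosses_translate: "int_crosses (a + t) (b + t) (c + t) (d + t) = int_crosses a b c d"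
  unfolding int_crosses_def by (auto simp: min_def max_def)

lemma int_crosses_uminus: "int_crosses (- a) (- b) (- c) (- d) = int_crosses a b c d"
  unfolding int_crosses_def by (auto simp: min_def max_def)

lemma int_crosses_rotate:
  fixes a b c d t N :: int
  defines "\<rho> x \<equiv> x + (if x < t then N else 0)"
  assumes "\<forall>x\<in>{a, b, c, d}. w \<le> x \<and> x < w + N"
  shows "int_crosses (\<rho> a) (\<rho> b) (\<rho> c) (\<rho> d) = int_crosses a b c d"
  using assms(2) unfolding \<rho>_def int_crosses_def by (auto simp: min_def max_def split: if_splits)

definition wrap :: "nat \<Rightarrow> int \<Rightarrow> nat" where
  "wrap n x = nat (x mod int n)"

lemma int_wrap: "0 < n \<Longrightarrow> int (wrap n x) = x mod int n"
  by (simp add: wrap_def)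

lemma wrap_lt: "0 < n \<Longrightarrow> wrap n x < n"
  by (simp add: wrap_def nat_less_iff)

lemma wrap_eqI: "y < n \<Longrightarrow> x = int y + q * int n \<Longrightarrow> wrap n x = y"
  unfolding wrap_def by simp

lemma wrap_of_nat: "wrap n (int y) = y mod n"
  by (simp add: wrap_def flip: of_nat_mod)

lemma wrap_add_wrap: "0 < n \<Longrightarrow> wrap n (int (wrap n x) + y) = wrap n (x + y)"
  unfolding wrap_def by (simp add: int_wrap mod_add_left_eq)

lemma wrap_diff_wrap: "0 < n \<Longrightarrow> wrap n (y - int (wrap n x)) = wrap n (y - x)"
  unfolding wrap_def by (simp add: mod_diff_right_eq)

lemma direction_wrap:
  assumes "0 < n" "wrap n a \<noteq> wrap n b"
  shows "direction n {wrap n a, wrap n b} = wrap n (a + b)"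
proof -
  have "direction n {wrap n a, wrap n b} = (wrap n a + wrap n b) mod n"
    using assms(2) by (simp add: direction_def)
  also have "int \<dots> = (a + b) mod int n"
    using assms(1) by (simp add: int_wrap zmod_int mod_add_eq)
  finally show ?thesis unfolding wrap_def by (metis nat_int)
qed

lemma inj_on_wrap: "inj_on (wrap n) {w..<w + int n}"
proof
  fix x y assume x: "x \<in> {w..<w + int n}" and y: "y \<in> {w..<w + int n}"
    and "wrap n x = wrap n y"
  then have "x mod int n = y mod int n"
    by (simp add: wrap_def eq_nat_nat_iff)
  then have "(x - w) mod int n = (y - w) mod int n"
    by (rule mod_diff_cong) simp
  moreover have "(x - w) mod int n = x - w" "(y - w) mod int n = y - w"
    using x y by simp_all
  ultimately show "x = y" by linarith
qed

lemma wrap_image: "0 < n \<Longrightarrow> wrap n ` {w..<w + int n} = {0..<n}"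
proof -
  assume n: "0 < n"
  have "wrap n ` {w..<w + int n} \<subseteq> {0..<n}"
    using wrap_lt[OF n] by auto
  moreover have "card (wrap n ` {w..<w + int n}) = n"
    by (simp add: card_image[OF inj_on_wrap])
  ultimately show ?thesis by (simp add: card_subset_eq)
qed

lemma crosses_wrap:
  assumes n: "0 < n" and window: "\<forall>x\<in>{a, b, c, d}. w \<le> x \<and> x < w + int n"
  shows "crosses (wrap n a) (wrap n b) (wrap n c) (wrap n d) = int_crosses a b c d"
proof -
  \<comment> \<open>t is the multiple of n in the window; the points below t wrap around to the top\<close>
  define t where "t = w + (- w) mod int n"
  have t_dvd: "t mod int n = 0"
    unfolding t_def by (simp add: mod_add_right_eq)
  have t_range: "w \<le> t" "t < w + int n"
    using n by (simp_all add: t_def)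
  have wrap_shift: "int (wrap n x) = x + (if x < t then int n else 0) - t"
    if "w \<le> x" "x < w + int n" for x
  proof -
    have "(x + (if x < t then int n else 0) - t) mod int n = x mod int n"
      using t_dvd by (simp add: mod_diff_right_eq[symmetric] mod_diff_eq[symmetric])
    moreover have "0 \<le> x + (if x < t then int n else 0) - t"
      "x + (if x < t then int n else 0) - t < int n"
      using that t_range by auto
    ultimately show ?thesis using n by (simp add: int_wrap)
  qed
  have "crosses (wrap n a) (wrap n b) (wrap n c) (wrap n d)
      = int_crosses (a + (if a < t then int n else 0) - t) (b + (if b < t then int n else 0) - t)
          (c + (if c < t then int n else 0) - t) (d + (if d < t then int n else 0) - t)"
    using window by (simp add: crosses_eq_int_crosses wrap_shift)
  also have "\<dots> = int_crosses a b c d"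
    using int_crosses_translate[of _ "- t"] int_crosses_rotate[OF window, of t] by simp
  finally show ?thesis .
qed

section \<open>Walks that grow an interval\<close>

text \<open>A state (l, h, c) records the interval [l, h] visited so far and the current vertex c;
  step True moves to h + 1, step False to l - 1.\<close>

type_synonym span = "int \<times> int \<times> int"

fun grow :: "span \<Rightarrow> bool \<Rightarrow> span" where
  "grow (l, h, c) True = (l, h + 1, h + 1)"
| "grow (l, h, c) False = (l - 1, h, l - 1)"

fun walk :: "span \<Rightarrow> bool list \<Rightarrow> int list" where
  "walk (l, h, c) [] = [c]"
| "walk (l, h, c) (True # w) = c # walk (l, h + 1, h + 1) w"
| "walk (l, h, c) (False # w) = c # walk (l - 1, h, l - 1) w"

fun walk_edges :: "span \<Rightarrow> bool list \<Rightarrow> (int \<times> int) set" where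
  "walk_edges s [] = {}"
| "walk_edges (l, h, c) (True # w) = insert (c, h + 1) (walk_edges (l, h + 1, h + 1) w)"
| "walk_edges (l, h, c) (False # w) = insert (c, l - 1) (walk_edges (l - 1, h, l - 1) w)"

definition anchored :: "span \<Rightarrow> bool" where
  "anchored s \<longleftrightarrow> (case s of (l, h, c) \<Rightarrow> l \<le> h \<and> (c = l \<or> c = h))"

lemma walk_edges_append:
  "walk_edges s (w1 @ w2) = walk_edges s w1 \<union> walk_edges (foldl grow s w1) w2"
  by (induction s w1 rule: walk_edges.induct) auto

lemma grow_step:
  assumes "anchored (l, h, c)" and "grow (l, h, c) b = (l2, h2, c2)"
  shows "anchored (l2, h2, c2)" and "{l2..h2} = insert c2 {l..h}" and "c2 \<notin> {l..h}"
    and "h2 - l2 = h - l + 1" and "l2 \<le> l" and "h \<le> h2"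
    and "walk (l, h, c) (b # w) = c # walk (l2, h2, c2) w"
    and "walk_edges (l, h, c) (b # w) = insert (c, c2) (walk_edges (l2, h2, c2) w)"
  using assms by (cases b; auto simp: anchored_def)+

lemma foldl_grow:
  assumes "anchored (l, h, c)" and "foldl grow (l, h, c) w = (l', h', c')"
  shows "anchored (l', h', c') \<and> l' \<le> l \<and> h \<le> h' \<and> h' - l' = h - l + int (length w)"
  using assms
proof (induction w arbitrary: l h c)
  case (Cons b w)
  obtain l2 h2 c2 where g: "grow (l, h, c) b = (l2, h2, c2)" by (cases "grow (l, h, c) b")
  note step = grow_step[OF Cons.prems(1) g]
  have "foldl grow (l2, h2, c2) w = (l', h', c')" using Cons.prems(2) g by simp
  then show ?case using Cons.IH step by force
qed simp

lemma walk_fills_interval: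
  assumes "anchored (l, h, c)" and "foldl grow (l, h, c) w = (l', h', c')"
  shows "distinct (walk (l, h, c) w) \<and> set (walk (l, h, c) w) \<inter> {l..h} = {c}
    \<and> {l..h} \<union> set (walk (l, h, c) w) = {l'..h'}"
  using assms
proof (induction w arbitrary: l h c)
  case Nil
  then show ?case by (auto simp: anchored_def)
next
  case (Cons b w)
  obtain l2 h2 c2 where g: "grow (l, h, c) b = (l2, h2, c2)" by (cases "grow (l, h, c) b")
  note step = grow_step[OF Cons.prems(1) g]
  have "foldl grow (l2, h2, c2) w = (l', h', c')" using Cons.prems(2) g by simp
  note IH = Cons.IH[OF step(1) this]
  have new: "set (walk (l2, h2, c2) w) \<inter> {l..h} = {}"
    using IH step(2,3) by auto
  have "c \<in> {l..h}" using Cons.prems(1) by (auto simp: anchored_def)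
  then show ?case using IH new step(2,7) by auto
qed

lemma walk_edges_window:
  assumes "anchored (l, h, c)" and "foldl grow (l, h, c) w = (l', h', c')"
    and "(a, b) \<in> walk_edges (l, h, c) w"
  shows "a \<in> {l'..h'} \<and> b \<in> {l'..h'} \<and> a \<noteq> b"
  using assms
proof (induction w arbitrary: l h c)
  case (Cons x w)
  obtain l2 h2 c2 where g: "grow (l, h, c) x = (l2, h2, c2)" by (cases "grow (l, h, c) x")
  note step = grow_step[OF Cons.prems(1) g]
  have fin: "foldl grow (l2, h2, c2) w = (l', h', c')" using Cons.prems(2) g by simp
  have "{l2..h2} \<subseteq> {l'..h'}" using foldl_grow[OF step(1) fin] by auto
  moreover have "c \<in> {l..h}" using Cons.prems(1) by (auto simp: anchored_def)
  ultimately show ?case using Cons.IH[OF step(1) fin] Cons.prems(3) step(2,3,8) by auto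
qed simp

lemma int_crosses_shared_end: "{a, b} \<inter> {x, y} \<noteq> {} \<Longrightarrow> \<not> int_crosses a b x y"
  by (auto simp: int_crosses_def)

lemma grow_edge_non_crossing:
  assumes "anchored (l, h, c)" and "grow (l, h, c) b = (l2, h2, c2)"
    and "x \<in> {l..h}" and "y \<in> {l..h}"
  shows "\<not> int_crosses c c2 x y"
  using assms by (cases b) (auto simp: anchored_def int_crosses_def)

lemma walk_edges_non_crossing:
  assumes "anchored (l, h, c)" and "(a, b) \<in> walk_edges (l, h, c) w"
    and "(x, y) \<in> walk_edges (l, h, c) w \<or> x \<in> {l..h} \<and> y \<in> {l..h}"
  shows "\<not> int_crosses a b x y"
  using assms
proof (induction w arbitrary: l h c a b x y)
  case (Cons z w)
  obtain l2 h2 c2 where g: "grow (l, h, c) z = (l2, h2, c2)" by (cases "grow (l, h, c) z")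
  note step = grow_step[OF Cons.prems(1) g]
  note IH = Cons.IH[OF step(1)]
  have c: "c \<in> {l2..h2}" "c2 \<in> {l2..h2}"
    using Cons.prems(1) step(2) by (auto simp: anchored_def)
  show ?case
  proof (cases "(a, b) = (c, c2)")
    case True
    consider "(x, y) = (c, c2)" | "(x, y) \<in> walk_edges (l2, h2, c2) w"
      | "x \<in> {l..h} \<and> y \<in> {l..h}"
      using Cons.prems(3) step(8) by auto
    then show ?thesis
    proof cases
      case 1
      then show ?thesis using True int_crosses_shared_end by auto
    next
      case 2
      then show ?thesis using True IH[OF 2] c by (auto simp: int_crosses_commute)
    next
      case 3
      then show ?thesis using True grow_edge_non_crossing[OF Cons.prems(1) g] by auto
    qed
  next
    case False
    then have ab: "(a, b) \<in> walk_edges (l2, h2, c2) w" using Cons.prems(2) step(8) by auto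
    have "(x, y) \<in> walk_edges (l2, h2, c2) w \<or> x \<in> {l2..h2} \<and> y \<in> {l2..h2}"
      using Cons.prems(3) step(2,8) c by auto
    then show ?thesis using IH[OF ab] by blast
  qed
qed simp

lemma walk_nth_0: "walk (l, h, c) w ! 0 = c"
proof (cases w)
  case (Cons b v)
  then show ?thesis by (cases b) auto
qed simp

lemma walk_nth_edge:
  "Suc i < length (walk s w) \<Longrightarrow> (walk s w ! i, walk s w ! Suc i) \<in> walk_edges s w"
proof (induction s w arbitrary: i rule: walk.induct)
  case (2 l h c w)
  then show ?case by (cases i) (auto simp: walk_nth_0)
next
  case (3 l h c w)
  then show ?case by (cases i) (auto simp: walk_nth_0)
qed simp

lemma walk_window:
  assumes "length w = n - 1" and "0 < n"
  obtains l where "set (walk (v, v, v) w) = {l..<l + int n}"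
    and "\<And>a b. (a, b) \<in> walk_edges (v, v, v) w \<Longrightarrow>
           a \<in> {l..<l + int n} \<and> b \<in> {l..<l + int n} \<and> a \<noteq> b"
proof -
  have v: "anchored (v, v, v)" by (simp add: anchored_def)
  obtain l h c where fin: "foldl grow (v, v, v) w = (l, h, c)" by (cases "foldl grow (v, v, v) w")
  have "{l..h} = {l..<l + int n}" using foldl_grow[OF v fin] assms by auto
  moreover have "set (walk (v, v, v) w) = {l..h}" using walk_fills_interval[OF v fin] by auto
  ultimately show ?thesis using that walk_edges_window[OF v fin] by presburger
qed

lemma is_shp_walk:
  assumes n: "0 < n" and len: "length w = n - 1"
  shows "is_shp n (map (wrap n) (walk (v, v, v) w))"
proof -
  let ?q = "walk (v, v, v) w"
  obtain l where set_q: "set ?q = {l..<l + int n}"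
    and window: "\<And>a b. (a, b) \<in> walk_edges (v, v, v) w \<Longrightarrow>
           a \<in> {l..<l + int n} \<and> b \<in> {l..<l + int n} \<and> a \<noteq> b"
    using walk_window[OF len n] by blast
  have "distinct ?q"
    using walk_fills_interval[of v v v w]
    by (cases "foldl grow (v, v, v) w") (simp add: anchored_def)
  then have "distinct (map (wrap n) ?q)"
    using inj_on_wrap[of n l] set_q by (simp add: distinct_map)
  moreover have "set (map (wrap n) ?q) = {0..<n}"
    using set_q wrap_image[OF n] by simp
  moreover have "\<not> crosses (map (wrap n) ?q ! i) (map (wrap n) ?q ! (i + 1))
      (map (wrap n) ?q ! j) (map (wrap n) ?q ! (j + 1))"
    if "i + 1 < length (map (wrap n) ?q)" "j + 1 < length (map (wrap n) ?q)" for i j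
  proof -
    have e: "(?q ! i, ?q ! Suc i) \<in> walk_edges (v, v, v) w"
      "(?q ! j, ?q ! Suc j) \<in> walk_edges (v, v, v) w"
      using that walk_nth_edge by simp_all
    have "\<not> int_crosses (?q ! i) (?q ! Suc i) (?q ! j) (?q ! Suc j)"
      using walk_edges_non_crossing[of v v v _ _ w] e by (simp add: anchored_def)
    moreover have
      "crosses (wrap n (?q ! i)) (wrap n (?q ! Suc i)) (wrap n (?q ! j)) (wrap n (?q ! Suc j))
        = int_crosses (?q ! i) (?q ! Suc i) (?q ! j) (?q ! Suc j)"
      using window[OF e(1)] window[OF e(2)] by (intro crosses_wrap[OF n, of _ _ _ _ l]) auto
    ultimately show ?thesis using that by simp
  qed
  ultimately show ?thesis
    unfolding is_shp_def by blast
qed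

lemma blocker_meets_walk:
  assumes "hits_all_shps n B" and n: "0 < n" and len: "length w = n - 1"
  obtains a b where "(a, b) \<in> walk_edges (v, v, v) w" and "wrap n a \<noteq> wrap n b"
    and "{wrap n a, wrap n b} \<in> B"
proof -
  let ?q = "walk (v, v, v) w"
  have "path_edges (map (wrap n) ?q) \<inter> B \<noteq> {}"
    using assms(1) is_shp_walk[OF n len] unfolding hits_all_shps_def by blast
  then obtain i where i: "Suc i < length ?q" and inB: "{wrap n (?q ! i), wrap n (?q ! Suc i)} \<in> B"
    unfolding path_edges_def by auto
  have e: "(?q ! i, ?q ! Suc i) \<in> walk_edges (v, v, v) w"
    using walk_nth_edge[OF i] .
  obtain l where "set ?q = {l..<l + int n}"
    and window: "\<And>a b. (a, b) \<in> walk_edges (v, v, v) w \<Longrightarrow>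
           a \<in> {l..<l + int n} \<and> b \<in> {l..<l + int n} \<and> a \<noteq> b"
    using walk_window[OF len n] by blast
  have "wrap n (?q ! i) \<noteq> wrap n (?q ! Suc i)"
    using window[OF e] inj_on_wrap[of n l] by (auto dest: inj_onD)
  then show ?thesis using that e inB by blast
qed

lemma foldl_grow_right_run [simp]:
  "foldl grow (l, h, h) (replicate k True) = (l, h + int k, h + int k)"
  by (induction k arbitrary: h) (auto simp: algebra_simps)

lemma foldl_grow_left_run [simp]:
  "foldl grow (l, h, l) (replicate k False) = (l - int k, h, l - int k)"
  by (induction k arbitrary: l) (auto simp: algebra_simps)

lemma foldl_grow_zigzag_right [simp]:
  "foldl grow (l, h, l) (concat (replicate k [True, False])) = (l - int k, h + int k, l - int k)"
  by (induction k arbitrary: l h) (auto simp: algebra_simps)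

lemma foldl_grow_zigzag_left [simp]:
  "foldl grow (l, h, h) (concat (replicate k [False, True])) = (l - int k, h + int k, h + int k)"
  by (induction k arbitrary: l h) (auto simp: algebra_simps)

lemma walk_edges_right_run:
  "(a, b) \<in> walk_edges (l, h, h) (replicate k True) \<Longrightarrow> b = a + 1 \<and> h \<le> a \<and> a < h + int k"
  by (induction k arbitrary: h) force+

lemma walk_edges_left_run:
  "(a, b) \<in> walk_edges (l, h, l) (replicate k False) \<Longrightarrow> a = b + 1 \<and> l - int k \<le> b \<and> b < l"
  by (induction k arbitrary: l) force+

lemma walk_edges_zigzag_right:
  "(a, b) \<in> walk_edges (l, h, l) (concat (replicate k [True, False])) \<Longrightarrow>
     a + b = l + h + 1 \<or> a + b = l + h \<and> h < a \<and> a \<le> h + int k"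
  by (induction k arbitrary: l h) force+

lemma walk_edges_zigzag_left:
  "(a, b) \<in> walk_edges (l, h, h) (concat (replicate k [False, True])) \<Longrightarrow>
     a + b = l + h - 1 \<or> a + b = l + h \<and> h < b \<and> b \<le> h + int k"
  by (induction k arbitrary: l h) force+

definition detour :: "nat \<Rightarrow> nat \<Rightarrow> nat \<Rightarrow> nat \<Rightarrow> bool list" where
  "detour r k g s = replicate r False @ concat (replicate k [True, False]) @ [True, True]
     @ concat (replicate g [False, True]) @ replicate s True"

lemma length_detour: "length (detour r k g s) = r + 2 * k + 2 + 2 * g + s"
  by (simp add: detour_def length_concat sum_list_replicate)

lemma walk_edges_detour:
  assumes "(a, b) \<in> walk_edges (A, A, A) (detour r k g s)"
  shows "a = b + 1 \<and> A - int r \<le> b \<and> b < A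
    \<or> b = a + 1 \<and> (a = A + int k + 1
        \<or> A + int k + 2 + int g \<le> a \<and> a < A + int k + 2 + int g + int s)
    \<or> a + b = 2 * A - int r + 1
    \<or> a + b = 2 * A - int r \<and> A < a \<and> a \<le> A + int k
    \<or> a + b = 2 * A - int r + 2 \<and> A + int k + 2 < b \<and> b \<le> A + int k + 2 + int g"
proof -
  let ?l = "A - int r - int k" and ?h = "A + int k + 2"
  consider "(a, b) \<in> walk_edges (A, A, A) (replicate r False)"
    | "(a, b) \<in> walk_edges (A - int r, A, A - int r) (concat (replicate k [True, False]))"
    | "(a, b) \<in> walk_edges (?l, A + int k, ?l) [True, True]"
    | "(a, b) \<in> walk_edges (?l, ?h, ?h) (concat (replicate g [False, True]))"
    | "(a, b) \<in> walk_edges (?l - int g, ?h + int g, ?h + int g) (replicate s True)"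
    using assms by (auto simp: detour_def walk_edges_append algebra_simps)
  then show ?thesis
  proof cases
    case 1
    then show ?thesis using walk_edges_left_run[of a b A A r] by simp
  next
    case 2
    then show ?thesis using walk_edges_zigzag_right by fastforce
  next
    case 3
    then show ?thesis by auto
  next
    case 4
    then show ?thesis using walk_edges_zigzag_left by fastforce
  next
    case 5
    then show ?thesis using walk_edges_right_run by fastforce
  qed
qed

section \<open>Reflection\<close>

definition mirror :: "nat \<Rightarrow> nat \<Rightarrow> nat \<Rightarrow> nat" where
  "mirror n a x = wrap n (int a - int x)"

lemma mirror_mirror: "x < n \<Longrightarrow> mirror n a (mirror n a x) = x"
  by (simp add: mirror_def wrap_diff_wrap wrap_of_nat)

lemma mirror_of_le: "x \<le> a \<Longrightarrow> a < n \<Longrightarrow> mirror n a x = a - x"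
  unfolding mirror_def by (rule wrap_eqI[where q = 0]) auto

lemma crosses_mirror:
  assumes "x < n" "y < n" "z < n" "u < n"
  shows "crosses (mirror n a x) (mirror n a y) (mirror n a z) (mirror n a u) = crosses x y z u"
proof -
  have "crosses (mirror n a x) (mirror n a y) (mirror n a z) (mirror n a u)
      = int_crosses (int a - int x) (int a - int y) (int a - int z) (int a - int u)"
    unfolding mirror_def using assms by (intro crosses_wrap[where w = "int a - int n + 1"]) auto
  also have "\<dots> = crosses x y z u"
    using int_crosses_translate[of "- int x" "int a" "- int y" "- int z" "- int u"]
      int_crosses_uminus[of "int x" "int y" "int z" "int u"]
    by (simp add: crosses_eq_int_crosses)
  finally show ?thesis .
qed

lemma mirror_lt: "0 < n \<Longrightarrow> mirror n a x < n"
  by (simp add: mirror_def wrap_lt)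

lemma mirror_image_interval: "mirror n a ` {0..<n} = {0..<n}"
proof
  show "mirror n a ` {0..<n} \<subseteq> {0..<n}" using mirror_lt by fastforce
  show "{0..<n} \<subseteq> mirror n a ` {0..<n}"
  proof
    fix x assume "x \<in> {0..<n}"
    then show "x \<in> mirror n a ` {0..<n}"
      using mirror_mirror[of x n a] mirror_lt[of n a x]
      by (intro image_eqI[of _ _ "mirror n a x"]) auto
  qed
qed

lemma mirror_image_mirror_image: "e \<subseteq> {0..<n} \<Longrightarrow> mirror n a ` mirror n a ` e = e"
  by (force simp: image_image mirror_mirror)

lemma ck_edge_subset: "e \<in> ck_edges n \<Longrightarrow> e \<subseteq> {0..<n}"
  by (auto simp: ck_edges_def)

lemma is_shp_mirror:
  assumes p: "is_shp n p"
  shows "is_shp n (map (mirror n a) p)"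
proof -
  have set_p: "set p = {0..<n}" and "distinct p"
    using p by (auto simp: is_shp_def)
  have inj: "inj_on (mirror n a) {0..<n}"
    by (rule inj_on_inverseI[where g = "mirror n a"]) (simp add: mirror_mirror)
  have lt: "p ! i < n" if "i < length p" for i
    using that set_p nth_mem by fastforce
  have "distinct (map (mirror n a) p)"
    using \<open>distinct p\<close> inj set_p by (simp add: distinct_map)
  moreover have "set (map (mirror n a) p) = {0..<n}"
    using set_p mirror_image_interval by simp
  moreover have "\<not> crosses (map (mirror n a) p ! i) (map (mirror n a) p ! (i + 1))
      (map (mirror n a) p ! j) (map (mirror n a) p ! (j + 1))"
    if "i + 1 < length (map (mirror n a) p)" "j + 1 < length (map (mirror n a) p)" for i j
    using p that crosses_mirror lt by (simp add: is_shp_def)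
  ultimately show ?thesis
    unfolding is_shp_def by blast
qed

lemma hits_all_shps_mirror:
  assumes "hits_all_shps n B"
  shows "hits_all_shps n ((`) (mirror n a) ` B)"
  unfolding hits_all_shps_def
proof (intro allI impI)
  fix p assume p: "is_shp n p"
  have "path_edges (map (mirror n a) p) \<inter> B \<noteq> {}"
    using assms is_shp_mirror[OF p] unfolding hits_all_shps_def by blast
  then obtain i where i: "i + 1 < length p" and inB: "mirror n a ` {p ! i, p ! (i + 1)} \<in> B"
    unfolding path_edges_def by auto
  have "{p ! i, p ! (i + 1)} \<subseteq> {0..<n}"
    using p i nth_mem by (fastforce simp: is_shp_def)
  then have "{p ! i, p ! (i + 1)} \<in> (`) (mirror n a) ` B"
    using inB mirror_image_mirror_image by (metis image_eqI)
  moreover have "{p ! i, p ! (i + 1)} \<in> path_edges p"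
    using i unfolding path_edges_def by auto
  ultimately show "path_edges p \<inter> (`) (mirror n a) ` B \<noteq> {}" by blast
qed

lemma direction_mirror:
  assumes "e \<in> ck_edges n"
  shows "direction n (mirror n a ` e) = wrap n (2 * int a - int (direction n e))"
proof -
  obtain x y where e: "e = {x, y}" "x \<noteq> y" "x < n" "y < n"
    using assms by (auto simp: ck_edges_def)
  then have n: "0 < n" by simp
  have "mirror n a x \<noteq> mirror n a y"
    using e mirror_mirror by metis
  then have "direction n (mirror n a ` e) = wrap n ((int a - int x) + (int a - int y))"
    using e direction_wrap[OF n] by (simp add: mirror_def)
  also have "\<dots> = wrap n (2 * int a - int (wrap n (int x + int y)))"
    by (simp add: wrap_diff_wrap[OF n] algebra_simps)
  also have "wrap n (int x + int y) = direction n e"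
    using e by (simp add: direction_def flip: wrap_of_nat)
  finally show ?thesis .
qed

lemma mirror_image_mem_iff:
  assumes "B \<subseteq> ck_edges n" and e: "e \<subseteq> {0..<n}"
  shows "mirror n a ` e \<in> (`) (mirror n a) ` B \<longleftrightarrow> e \<in> B"
proof
  assume "mirror n a ` e \<in> (`) (mirror n a) ` B"
  then obtain e' where e': "e' \<in> B" "mirror n a ` e = mirror n a ` e'" by blast
  have "e' \<subseteq> {0..<n}" using e' assms(1) ck_edge_subset by blast
  then have "e = e'"
    using e' mirror_image_mirror_image[OF e] mirror_image_mirror_image[of e' n a] by metis
  then show "e \<in> B" using e' by simp
qed simp

lemma inj_on_direction_mirror:
  assumes B: "B \<subseteq> ck_edges n" and inj: "inj_on (direction n) B"
  shows "inj_on (direction n) ((`) (mirror n a) ` B)"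
proof (rule inj_onI)
  fix e1' e2' assume "e1' \<in> (`) (mirror n a) ` B" "e2' \<in> (`) (mirror n a) ` B"
    and eq: "direction n e1' = direction n e2'"
  then obtain e1 e2 where e: "e1 \<in> B" "e2 \<in> B" "e1' = mirror n a ` e1" "e2' = mirror n a ` e2"
    by blast
  then have n: "0 < n" using B by (auto simp: ck_edges_def)
  have "direction n e = wrap n (2 * int a - int (direction n (mirror n a ` e)))" if "e \<in> B" for e
    using that B direction_mirror[of e n a] wrap_diff_wrap[OF n] wrap_of_nat
    by (auto simp: direction_def)
  then have "direction n e1 = direction n e2" using e eq by simp
  then show "e1' = e2'" using e inj by (auto dest: inj_onD)
qed

section \<open>Blockers with a single gap\<close>

locale gapped_blocker =
  fixes m n \<alpha> \<beta> \<delta> :: nat and B :: "nat set set"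
  assumes m_ge_2: "2 \<le> m" and n_eq: "n = 2 * m - 1"
    and hits: "hits_all_shps n B"
    and B_directions: "\<forall>e\<in>B. direction n e \<in> (\<lambda>i. (2 * i + 1) mod n) ` {0..<m}"
    and inj_direction: "inj_on (direction n) B"
    and \<delta>_lt: "\<delta> < m"
    and first_in: "{\<alpha>, \<alpha> + 1} \<in> B"
    and first_min: "\<forall>i<\<alpha>. {i, i + 1} \<notin> B"
    and last_max: "\<forall>i. m - \<delta> \<le> i \<and> i < m \<longrightarrow> {i, i + 1} \<notin> B"
    and gap_lt: "\<alpha> + \<beta> < m - \<delta>"
    and gap_notin: "{\<alpha> + \<beta>, \<alpha> + \<beta> + 1} \<notin> B"
begin

lemma n_pos: "0 < n"
  using m_ge_2 n_eq by simp

lemma m_lt_n: "m < n"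
  using m_ge_2 n_eq by simp

lemma \<beta>_pos: "0 < \<beta>"
  using first_in gap_notin by (cases \<beta>) auto

lemma even_direction_notin:
  assumes "even (direction n e)" and "direction n e \<noteq> 0"
  shows "e \<notin> B"
proof
  assume "e \<in> B"
  then obtain i where "i < m" "direction n e = (2 * i + 1) mod n"
    using B_directions by auto
  moreover have "(2 * i + 1) mod n = 0 \<or> (2 * i + 1) mod n = 2 * i + 1" if "i < m" for i
    using that n_eq by (cases "2 * i + 1 = n") auto
  ultimately show False using assms by force
qed

lemma boundary_notin:
  assumes "y < n" and "y < \<alpha> \<or> y = \<alpha> + \<beta> \<or> m - \<delta> \<le> y"
  shows "{y, (y + 1) mod n} \<notin> B"
proof -
  have succ: "(y + 1) mod n = y + 1" if "y < m"
    using that n_eq m_ge_2 by simp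
  consider "y < \<alpha>" | "y = \<alpha> + \<beta>" | "m - \<delta> \<le> y" "y < m" | "m \<le> y"
    using assms(2) by linarith
  then show ?thesis
  proof cases
    case 1
    then show ?thesis using first_min gap_lt succ by auto
  next
    case 2
    then show ?thesis using gap_notin gap_lt succ by auto
  next
    case 3
    then show ?thesis using last_max succ by auto
  next
    case 4
    have "direction n {y, (y + 1) mod n} = 2 * (y + 1 - m)"
    proof (cases "y + 1 = n")
      case True
      then show ?thesis using n_eq m_ge_2 by (simp add: direction_def)
    next
      case False
      then have "direction n {y, (y + 1) mod n} = (2 * y + 1) mod n"
        using assms(1) by (simp add: direction_def mult_2)
      also have "\<dots> = 2 * y + 1 - n"
      proof -
        have "n \<le> 2 * y + 1" "2 * y + 1 - n < n" using 4 assms(1) n_eq by linarith+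
        then show ?thesis by (simp add: le_mod_geq)
      qed
      also have "\<dots> = 2 * (y + 1 - m)" using 4 n_eq m_ge_2 by arith
      finally show ?thesis .
    qed
    then show ?thesis using 4 m_ge_2 by (intro even_direction_notin) auto
  qed
qed

lemma wrap_outside_gap:
  assumes "int m - int \<delta> - int n \<le> x \<and> x < int \<alpha> \<or> int m - int \<delta> \<le> x \<and> x < int \<alpha> + int n"
  shows "wrap n x < \<alpha> \<or> m - \<delta> \<le> wrap n x"
proof -
  consider "x < 0" | "0 \<le> x" "x < int n" | "int n \<le> x" by linarith
  then show ?thesis
  proof cases
    case 1
    then have "wrap n x = nat (x + int n)"
      using assms gap_lt by (intro wrap_eqI[where q = "- 1"]) auto
    then show ?thesis using 1 assms by linarith
  next
    case 2
    then have "wrap n x = nat x" by (intro wrap_eqI[where q = 0]) auto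
    then show ?thesis using 2 assms by linarith
  next
    case 3
    moreover have "x < int \<alpha> + int n" using 3 assms m_lt_n by linarith
    ultimately have "wrap n x = nat (x - int n)"
      using gap_lt m_lt_n by (intro wrap_eqI[where q = 1]) auto
    then show ?thesis using 3 assms by linarith
  qed
qed

lemma boundary_wrap_notin:
  assumes "int m - int \<delta> - int n \<le> x \<and> x < int \<alpha> \<or> int m - int \<delta> \<le> x \<and> x < int \<alpha> + int n
    \<or> x = int (\<alpha> + \<beta>)"
  shows "{wrap n x, wrap n (x + 1)} \<notin> B"
proof -
  have "wrap n (x + 1) = (wrap n x + 1) mod n"
    using wrap_add_wrap[OF n_pos, of x 1] wrap_of_nat[of n "wrap n x + 1"]
    by (metis of_nat_Suc add.commute Suc_eq_plus1)
  moreover have "wrap n x < \<alpha> \<or> wrap n x = \<alpha> + \<beta> \<or> m - \<delta> \<le> wrap n x"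
  proof (cases "x = int (\<alpha> + \<beta>)")
    case True
    then show ?thesis using wrap_of_nat[of n "\<alpha> + \<beta>"] gap_lt m_lt_n by simp
  next
    case False
    then show ?thesis using assms wrap_outside_gap by blast
  qed
  ultimately show ?thesis
    using boundary_notin[OF wrap_lt[OF n_pos]] by simp
qed

definition detour_at :: "nat \<Rightarrow> bool list" where
  "detour_at j = detour (2 * \<alpha> - 2 * j - 1) (\<beta> - 1) (m - \<delta> - \<alpha> - \<beta> - 1) (2 * \<delta> + 2 * j + 1)"

lemma length_detour_at: "j < \<alpha> \<Longrightarrow> length (detour_at j) = n - 1"
  using \<beta>_pos gap_lt n_eq by (simp add: detour_at_def length_detour)

lemma walk_edges_detour_at:
  assumes j: "j < \<alpha>" and ab: "(a, b) \<in> walk_edges (int \<alpha>, int \<alpha>, int \<alpha>) (detour_at j)"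
  shows "a = b + 1 \<and> 2 * int j + 1 - int \<alpha> \<le> b \<and> b < int \<alpha>
    \<or> b = a + 1 \<and> (a = int (\<alpha> + \<beta>) \<or> int m - int \<delta> \<le> a \<and> a < int m + int \<delta> + 2 * int j + 1)
    \<or> a + b = 2 * int j + 2
    \<or> a + b = 2 * int j + 1 \<and> int \<alpha> < a \<and> a < int \<alpha> + int \<beta>
    \<or> a + b = 2 * int j + 3 \<and> int \<alpha> + int \<beta> + 1 < b \<and> b \<le> int m - int \<delta>"
proof -
  define r k g s where "r = 2 * \<alpha> - 2 * j - 1" and "k = \<beta> - 1"
    and "g = m - \<delta> - \<alpha> - \<beta> - 1" and "s = 2 * \<delta> + 2 * j + 1"
  have ints: "int r = 2 * int \<alpha> - 2 * int j - 1" "int k = int \<beta> - 1"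
    "int g = int m - int \<delta> - int \<alpha> - int \<beta> - 1" "int s = 2 * int \<delta> + 2 * int j + 1"
    using j \<beta>_pos gap_lt by (simp_all add: r_def k_def g_def s_def of_nat_diff)
  have "(a, b) \<in> walk_edges (int \<alpha>, int \<alpha>, int \<alpha>) (detour r k g s)"
    using ab by (simp add: detour_at_def r_def k_def g_def s_def)
  from walk_edges_detour[OF this] show ?thesis
    unfolding ints by (elim disjE conjE) (simp_all add: algebra_simps)
qed

lemma detour_at_edge_in_blocker:
  assumes j: "j < \<alpha>" and ab: "(a, b) \<in> walk_edges (int \<alpha>, int \<alpha>, int \<alpha>) (detour_at j)"
    and ne: "wrap n a \<noteq> wrap n b" and inB: "{wrap n a, wrap n b} \<in> B"
  shows "direction n {wrap n a, wrap n b} = 2 * j + 1 \<and> \<alpha> < wrap n a \<and> wrap n a < \<alpha> + \<beta>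
    \<or> direction n {wrap n a, wrap n b} = 2 * j + 3 \<and> (\<forall>v\<in>{wrap n a, wrap n b}. v < \<alpha> \<or> \<alpha> + \<beta> < v)"
proof -
  have dir_ab: "direction n {wrap n a, wrap n b} = wrap n (a + b)"
    using direction_wrap[OF n_pos ne] .
  have int_n: "int n = 2 * int m - 1"
    using n_eq m_ge_2 by simp
  have small: "2 * int j + 3 < int n"
    using j gap_lt \<beta>_pos int_n by linarith
  from walk_edges_detour_at[OF j ab] show ?thesis
  proof (elim disjE conjE)
    assume b: "a = b + 1" "2 * int j + 1 - int \<alpha> \<le> b" "b < int \<alpha>"
    moreover have "int m - int \<delta> - int n \<le> b" using b int_n gap_lt by linarith
    ultimately show ?thesis using boundary_wrap_notin[of b] inB by (simp add: insert_commute)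
  next
    assume "b = a + 1" "a = int (\<alpha> + \<beta>)"
    then show ?thesis using boundary_wrap_notin[of a] inB by simp
  next
    assume a: "b = a + 1" "int m - int \<delta> \<le> a" "a < int m + int \<delta> + 2 * int j + 1"
    moreover have "a < int \<alpha> + int n" using a int_n j gap_lt by linarith
    ultimately show ?thesis using boundary_wrap_notin[of a] inB by simp
  next
    assume "a + b = 2 * int j + 2"
    then have "wrap n (a + b) = 2 * (j + 1)"
      using small by (intro wrap_eqI[where q = 0]) simp_all
    then show ?thesis using even_direction_notin inB dir_ab by simp
  next
    assume sum: "a + b = 2 * int j + 1" and a: "int \<alpha> < a" "a < int \<alpha> + int \<beta>"
    have "wrap n (a + b) = 2 * j + 1"
      using sum small by (intro wrap_eqI[where q = 0]) simp_all
    moreover have "wrap n a = nat a"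
      using a int_n gap_lt by (intro wrap_eqI[where q = 0]) auto
    ultimately show ?thesis using dir_ab a by auto
  next
    assume sum: "a + b = 2 * int j + 3" and b: "int \<alpha> + int \<beta> + 1 < b" "b \<le> int m - int \<delta>"
    have "wrap n (a + b) = 2 * j + 3"
      using sum small by (intro wrap_eqI[where q = 0]) simp_all
    moreover have "wrap n b = nat b"
      using b int_n gap_lt by (intro wrap_eqI[where q = 0]) auto
    moreover have "wrap n a < \<alpha> \<or> m - \<delta> \<le> wrap n a"
      using sum b int_n j by (intro wrap_outside_gap) linarith
    ultimately show ?thesis using dir_ab b gap_lt by auto
  qed
qed

lemma inner_vertex_step:
  assumes j: "j < \<alpha>"
    and next_dir: "\<forall>e\<in>B. direction n e = 2 * j + 3 \<longrightarrow> (\<exists>v\<in>e. \<alpha> \<le> v \<and> v < \<alpha> + \<beta>)"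
    and e: "e \<in> B" and dir_e: "direction n e = 2 * j + 1"
  shows "\<exists>v\<in>e. \<alpha> < v \<and> v < \<alpha> + \<beta>"
proof -
  obtain a b where ab: "(a, b) \<in> walk_edges (int \<alpha>, int \<alpha>, int \<alpha>) (detour_at j)"
    and ne: "wrap n a \<noteq> wrap n b" and inB: "{wrap n a, wrap n b} \<in> B"
    using blocker_meets_walk[OF hits n_pos length_detour_at[OF j]] by blast
  consider "direction n {wrap n a, wrap n b} = 2 * j + 1" "\<alpha> < wrap n a" "wrap n a < \<alpha> + \<beta>"
    | "direction n {wrap n a, wrap n b} = 2 * j + 3" "\<forall>v\<in>{wrap n a, wrap n b}. v < \<alpha> \<or> \<alpha> + \<beta> < v"
    using detour_at_edge_in_blocker[OF j ab ne inB] by blast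
  then show ?thesis
  proof cases
    case 1
    then have "direction n {wrap n a, wrap n b} = direction n e" using dir_e by simp
    then have "{wrap n a, wrap n b} = e" using inj_onD[OF inj_direction _ inB e] by blast
    then show ?thesis using 1 by blast
  next
    case 2
    then show ?thesis using next_dir inB by fastforce
  qed
qed

theorem inner_vertex_left:
  assumes e: "e \<in> B" and dir_e: "direction n e \<in> (\<lambda>i. (2 * i + 1) mod n) ` {0..<\<alpha>}"
  shows "\<exists>v\<in>e. \<alpha> < v \<and> v < \<alpha> + \<beta>"
proof -
  have small: "2 * \<alpha> + 1 < n"
    using gap_lt \<beta>_pos n_eq by linarith
  \<comment> \<open>the non-strict bound also holds for j = \<alpha>, where the edge is [\<alpha>, \<alpha> + 1]\<close>
  have weak: "\<forall>e\<in>B. direction n e = 2 * j + 1 \<longrightarrow> (\<exists>v\<in>e. \<alpha> \<le> v \<and> v < \<alpha> + \<beta>)"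
    if "j \<le> \<alpha>" for j
    using that
  proof (induction j rule: inc_induct)
    case base
    have "direction n {\<alpha>, \<alpha> + 1} = 2 * \<alpha> + 1"
      using small by (simp add: direction_def)
    show ?case
    proof (intro ballI impI)
      fix e assume "e \<in> B" "direction n e = 2 * \<alpha> + 1"
      then have "e = {\<alpha>, \<alpha> + 1}"
        using first_in inj_onD[OF inj_direction] \<open>direction n {\<alpha>, \<alpha> + 1} = _\<close> by metis
      then show "\<exists>v\<in>e. \<alpha> \<le> v \<and> v < \<alpha> + \<beta>" using \<beta>_pos by simp
    qed
  next
    case (step j)
    then have "\<forall>e\<in>B. direction n e = 2 * j + 3 \<longrightarrow> (\<exists>v\<in>e. \<alpha> \<le> v \<and> v < \<alpha> + \<beta>)"
      by simp
    then show ?case using inner_vertex_step[OF step(2)] by (meson less_imp_le)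
  qed
  obtain j where j: "j < \<alpha>" "direction n e = (2 * j + 1) mod n"
    using dir_e by auto
  then have "direction n e = 2 * j + 1" using small by simp
  moreover have "\<forall>e\<in>B. direction n e = 2 * j + 3 \<longrightarrow> (\<exists>v\<in>e. \<alpha> \<le> v \<and> v < \<alpha> + \<beta>)"
    using weak[of "Suc j"] j by simp
  ultimately show ?thesis using inner_vertex_step[OF j(1) _ e] by simp
qed

lemma direction_mirror_boundary:
  assumes "e \<in> ck_edges n" and "direction n e = (2 * i + 1) mod n" and "i < m"
  shows "direction n (mirror n m ` e) = (2 * (m - 1 - i) + 1) mod n"
proof -
  have "(2 * i + 1) mod n = wrap n (int (2 * i + 1))"
    by (rule wrap_of_nat[symmetric])
  then have "direction n (mirror n m ` e) = wrap n (2 * int m - int (wrap n (int (2 * i + 1))))"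
    using direction_mirror[OF assms(1)] assms(2) by simp
  also have "\<dots> = wrap n (int (2 * (m - 1 - i) + 1))"
    using assms(3) by (simp add: wrap_diff_wrap[OF n_pos] of_nat_diff algebra_simps)
  finally show ?thesis by (simp only: wrap_of_nat)
qed

lemma mirror_boundary_mem_iff:
  assumes "B \<subseteq> ck_edges n" and "i < m"
  shows "{i, i + 1} \<in> (`) (mirror n m) ` B \<longleftrightarrow> {m - i - 1, m - i} \<in> B"
proof -
  have "mirror n m ` {m - i - 1, m - i} = {i, i + 1}"
    using assms(2) m_lt_n by (auto simp: mirror_of_le)
  moreover have "{m - i - 1, m - i} \<subseteq> {0..<n}"
    using assms(2) m_lt_n by auto
  ultimately show ?thesis using mirror_image_mem_iff[OF assms(1)] by metis
qed

lemma mirror_directions: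
  assumes "B \<subseteq> ck_edges n"
  shows "\<forall>e\<in>(`) (mirror n m) ` B. direction n e \<in> (\<lambda>i. (2 * i + 1) mod n) ` {0..<m}"
proof
  fix e' assume "e' \<in> (`) (mirror n m) ` B"
  then obtain e where e: "e \<in> B" "e' = mirror n m ` e" by blast
  then obtain i where "i < m" "direction n e = (2 * i + 1) mod n"
    using B_directions by auto
  then show "direction n e' \<in> (\<lambda>i. (2 * i + 1) mod n) ` {0..<m}"
    using e direction_mirror_boundary assms by auto
qed

lemma gapped_blocker_mirror:
  assumes B_sub: "B \<subseteq> ck_edges n" and last_in: "{m - \<delta> - 1, m - \<delta>} \<in> B"
  shows "gapped_blocker m n \<delta> (m - \<delta> - (\<alpha> + \<beta>) - 1) \<alpha> ((`) (mirror n m) ` B)"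
proof -
  let ?M = "mirror n m"
  note boundary = mirror_boundary_mem_iff[OF B_sub]
  show ?thesis
  proof unfold_locales
    show "hits_all_shps n ((`) ?M ` B)"
      using hits_all_shps_mirror[OF hits] .
    show "\<forall>e\<in>(`) ?M ` B. direction n e \<in> (\<lambda>i. (2 * i + 1) mod n) ` {0..<m}"
      using mirror_directions[OF B_sub] .
    show "inj_on (direction n) ((`) ?M ` B)"
      using inj_on_direction_mirror[OF B_sub inj_direction] .
    show "\<alpha> < m" using gap_lt by linarith
    show "{\<delta>, \<delta> + 1} \<in> (`) ?M ` B"
      using boundary[OF \<delta>_lt] last_in by (simp add: diff_diff_add)
    show "\<forall>i<\<delta>. {i, i + 1} \<notin> (`) ?M ` B"
    proof (intro allI impI)
      fix i assume i: "i < \<delta>"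
      then have "m - \<delta> \<le> m - i - 1" "m - i - 1 < m" "m - i - 1 + 1 = m - i"
        using \<delta>_lt by linarith+
      then show "{i, i + 1} \<notin> (`) ?M ` B"
        using boundary[of i] last_max i \<delta>_lt by fastforce
    qed
    show "\<forall>i. m - \<alpha> \<le> i \<and> i < m \<longrightarrow> {i, i + 1} \<notin> (`) ?M ` B"
    proof (intro allI impI)
      fix i assume i: "m - \<alpha> \<le> i \<and> i < m"
      then have "m - i - 1 < \<alpha>" "m - i - 1 + 1 = m - i"
        by linarith+
      then show "{i, i + 1} \<notin> (`) ?M ` B"
        using boundary[of i] first_min i by fastforce
    qed
    show "\<delta> + (m - \<delta> - (\<alpha> + \<beta>) - 1) < m - \<alpha>"
      using gap_lt by linarith
    show "{\<delta> + (m - \<delta> - (\<alpha> + \<beta>) - 1), \<delta> + (m - \<delta> - (\<alpha> + \<beta>) - 1) + 1} \<notin> (`) ?M ` B"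
    proof -
      let ?i = "\<delta> + (m - \<delta> - (\<alpha> + \<beta>) - 1)"
      have "?i < m" "m - ?i - 1 = \<alpha> + \<beta>" "m - ?i = \<alpha> + \<beta> + 1"
        using gap_lt by linarith+
      then show ?thesis using boundary[of ?i] gap_notin by simp
    qed
  qed (use m_ge_2 n_eq in auto)
qed

theorem inner_vertex_right:
  assumes B_sub: "B \<subseteq> ck_edges n" and last_in: "{m - \<delta> - 1, m - \<delta>} \<in> B"
    and e: "e \<in> B" and dir_e: "direction n e \<in> (\<lambda>i. (2 * i + 1) mod n) ` {m - \<delta>..<m}"
  shows "\<exists>v\<in>e. \<alpha> + \<beta> + 1 < v \<and> v < m - \<delta>"
proof -
  interpret mirrored: gapped_blocker m n \<delta> "m - \<delta> - (\<alpha> + \<beta>) - 1" \<alpha> "(`) (mirror n m) ` B"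
    using gapped_blocker_mirror[OF B_sub last_in] .
  obtain i where i: "m - \<delta> \<le> i" "i < m" "direction n e = (2 * i + 1) mod n"
    using dir_e by auto
  then have "direction n (mirror n m ` e) = (2 * (m - 1 - i) + 1) mod n"
    using direction_mirror_boundary e B_sub by blast
  moreover have "m - 1 - i < \<delta>" using i by linarith
  ultimately have "direction n (mirror n m ` e) \<in> (\<lambda>i. (2 * i + 1) mod n) ` {0..<\<delta>}"
    by simp
  then obtain v where v: "v \<in> mirror n m ` e" "\<delta> < v" "v < \<delta> + (m - \<delta> - (\<alpha> + \<beta>) - 1)"
    using mirrored.inner_vertex_left e by blast
  then obtain u where u: "u \<in> e" "v = mirror n m u" by blast
  have "u < n" using u(1) ck_edge_subset[OF subsetD[OF B_sub e]] by auto
  then have "u = mirror n m v"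
    using u mirror_mirror by simp
  also have "\<dots> = m - v"
    using v(3) m_lt_n \<delta>_lt by (intro mirror_of_le) linarith+
  finally show ?thesis using u v gap_lt by (intro bexI[of _ u]) auto
qed

end

theorem proposition7:
  fixes m n \<alpha> \<beta> \<delta> :: nat and B :: "nat set set"
  assumes m2: "m \<ge> 2"
    and n_def: "n = 2 * m - 1"
    and blocker: "is_blocker n B"
    and cardB: "card B = m"
    and dirs: "bij_betw (direction n) B ((\<lambda>i. (2 * i + 1) mod n) ` {0..<m})"
    and delta_lt: "\<delta> < m"
    and first_in: "{\<alpha>, \<alpha> + 1} \<in> B"
    and first_min: "\<forall>i<\<alpha>. {i, i + 1} \<notin> B"
    and last_in: "{m - \<delta> - 1, m - \<delta>} \<in> B"
    and last_max: "\<forall>i. m - \<delta> \<le> i \<and> i < m \<longrightarrow> {i, i + 1} \<notin> B"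
    and beta_range: "\<alpha> + \<beta> < m - \<delta>"
    and missed: "{\<alpha> + \<beta>, \<alpha> + \<beta> + 1} \<notin> B"
    and others: "\<forall>i. \<alpha> \<le> i \<and> i < m - \<delta> \<and> i \<noteq> \<alpha> + \<beta> \<longrightarrow> {i, i + 1} \<in> B"
  shows "(\<forall>e\<in>B. direction n e \<in> (\<lambda>i. (2 * i + 1) mod n) ` {0..<\<alpha>} \<longrightarrow>
            (\<exists>v\<in>e. \<alpha> < v \<and> v < \<alpha> + \<beta>))
       \<and> (\<forall>e\<in>B. direction n e \<in> (\<lambda>i. (2 * i + 1) mod n) ` {m - \<delta>..<m} \<longrightarrow>
            (\<exists>v\<in>e. \<alpha> + \<beta> + 1 < v \<and> v < m - \<delta>))"
proof -
  \<comment> \<open>neither card B = m nor the other edges of B on <\<alpha>, ..., m - \<delta>> are needed\<close>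
  have B_sub: "B \<subseteq> ck_edges n" and hits: "hits_all_shps n B"
    using blocker by (auto simp: is_blocker_def)
  interpret gapped_blocker m n \<alpha> \<beta> \<delta> B
  proof
    show "\<forall>e\<in>B. direction n e \<in> (\<lambda>i. (2 * i + 1) mod n) ` {0..<m}"
      using bij_betw_imp_surj_on[OF dirs] by blast
    show "inj_on (direction n) B"
      using dirs by (rule bij_betw_imp_inj_on)
  qed (fact m2 n_def hits delta_lt first_in first_min last_max beta_range missed)+
  show ?thesis
    using inner_vertex_left inner_vertex_right[OF B_sub last_in] by blast
qed

end
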